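(* Let $\phi=\frac{1+\sqrt5}{2}$ and let $n\ge 2$ be an integer. Let $G$ be a bipartite multigraph consisting of $n$ matchings $M_1,\dots,M_n$ (not necessarily edge-disjoint), each with at least $\phi n+20n/\log n$ edges. Then $G$ contains a rainbow matching with $n$ edges.
   Context: $\log$ denotes the natural logarithm. Each matching $M_i$ is a colour class (colour $i$); if the same pair of vertices is an edge of several $M_i$, these are treated as distinct parallel edges of different colours. A matching is rainbow if it contains at most one edge of each colour. *)

theory Defs
  imports Complex_Main
begin

definition bip_matching :: "'v set \<Rightarrow> 'v set \<Rightarrow> ('v \<times> 'v) set \<Rightarrow> bool" where
  "bip_matching A B M \<longleftrightarrow> M \<subseteq> A \<times> B \<and>
     (\<forall>e\<in>M. \<forall>f\<in>M. e \<noteq> f \<longrightarrow> fst e \<noteq> fst f \<and> snd e \<noteq> snd f)"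

definition rainbow_matching ::
  "nat set \<Rightarrow> (nat \<Rightarrow> ('v \<times> 'v) set) \<Rightarrow> (nat \<times> ('v \<times> 'v)) set \<Rightarrow> bool" where
  "rainbow_matching I M R \<longleftrightarrow>
     (\<forall>(i, e)\<in>R. i \<in> I \<and> e \<in> M i) \<and>
     (\<forall>(i, e)\<in>R. \<forall>(j, f)\<in>R. (i, e) \<noteq> (j, f) \<longrightarrow>
        i \<noteq> j \<and> fst e \<noteq> fst f \<and> snd e \<noteq> snd f)"

definition golden_ratio :: real where
  "golden_ratio = (1 + sqrt 5) / 2"

end

theory Submission
  imports Defs
begin

text \<open>
  Let \<open>F\<close> be a maximum rainbow matching, of size \<open>k < n\<close>, and let every colour class have at
  least \<open>L\<close> edges. Call \<open>G\<close> a switching of \<open>F\<close> if it is a rainbow matching of size \<open>k\<close> whose edges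
  outside \<open>F\<close> use left vertices of \<open>F\<close> and right vertices not covered by \<open>F\<close>. By maximality,
  every edge of a colour unused by a switching meets it. Let \<open>H\<^sub>j\<close> (\<open>freeable j\<close>) be the set of edges
  of \<open>F\<close> whose colour becomes unused in some switching differing from \<open>F\<close> in at most \<open>j\<close> edges.
  Counting pairs \<open>(h, g)\<close> where the colour of \<open>h \<in> H\<^sub>j\<close> can replace \<open>g\<close> in such a switching,
  each \<open>h\<close> has at least \<open>L - k - 2j\<close> partners and each \<open>g \<in> H\<^sub>j\<^sub>+\<^sub>1\<close> at most
  \<open>2k - L + j + 1\<close>, so \<open>|H\<^sub>j| (L - k - 2j) \<le> |H\<^sub>j\<^sub>+\<^sub>1| (2k - L + j + 1)\<close>.
  With \<open>|H\<^sub>1| \<ge> L - k\<close> and \<open>|H\<^sub>3| \<le> k\<close> this yields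
  \<open>(L - k)(L - k - 2)(L - k - 4) \<le> k (2k - L + 2)(2k - L + 3)\<close>, which fails once
  \<open>L \<ge> 1.618 n\<close> and \<open>n \<ge> 1000\<close>; for smaller \<open>n\<close> the term \<open>20n / ln n\<close> alone gives \<open>L > 2k\<close>,
  contradicting the bound \<open>L \<le> 2k\<close> that maximality forces.
\<close>

definition left_vertices :: "(nat \<times> ('v \<times> 'v)) set \<Rightarrow> 'v set" where
  "left_vertices R = fst ` snd ` R"

definition right_vertices :: "(nat \<times> ('v \<times> 'v)) set \<Rightarrow> 'v set" where
  "right_vertices R = snd ` snd ` R"

lemma finite_left_vertices: "finite R \<Longrightarrow> finite (left_vertices R)"
  unfolding left_vertices_def by simp

lemma finite_right_vertices: "finite R \<Longrightarrow> finite (right_vertices R)"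
  unfolding right_vertices_def by simp

lemma card_left_vertices_le: "finite R \<Longrightarrow> card (left_vertices R) \<le> card R"
  unfolding left_vertices_def by (metis card_image_le finite_imageI le_trans)

lemma card_right_vertices_le: "finite R \<Longrightarrow> card (right_vertices R) \<le> card R"
  unfolding right_vertices_def by (metis card_image_le finite_imageI le_trans)

lemma bip_matching_card_fst_in:
  assumes "bip_matching A B M" "finite S"
  shows "card {e \<in> M. fst e \<in> S} \<le> card S"
proof -
  have "inj_on fst {e \<in> M. fst e \<in> S}"
    using assms(1) unfolding bip_matching_def inj_on_def by blast
  then show ?thesis by (rule card_inj_on_le) (auto simp: assms(2))
qed

lemma bip_matching_card_snd_in:
  assumes "bip_matching A B M" "finite S"
  shows "card {e \<in> M. snd e \<in> S} \<le> card S"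
proof -
  have "inj_on snd {e \<in> M. snd e \<in> S}"
    using assms(1) unfolding bip_matching_def inj_on_def by blast
  then show ?thesis by (rule card_inj_on_le) (auto simp: assms(2))
qed

lemma rainbow_matching_memD: "rainbow_matching I M R \<Longrightarrow> x \<in> R \<Longrightarrow> fst x \<in> I \<and> snd x \<in> M (fst x)"
  unfolding rainbow_matching_def by fastforce

lemma rainbow_matching_colour_eq:
  "rainbow_matching I M R \<Longrightarrow> x \<in> R \<Longrightarrow> y \<in> R \<Longrightarrow> fst x = fst y \<Longrightarrow> x = y"
  unfolding rainbow_matching_def by fastforce

lemma rainbow_matching_left_eq:
  "rainbow_matching I M R \<Longrightarrow> x \<in> R \<Longrightarrow> y \<in> R \<Longrightarrow> fst (snd x) = fst (snd y) \<Longrightarrow> x = y"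
  unfolding rainbow_matching_def by fastforce

lemma rainbow_matching_right_eq:
  "rainbow_matching I M R \<Longrightarrow> x \<in> R \<Longrightarrow> y \<in> R \<Longrightarrow> snd (snd x) = snd (snd y) \<Longrightarrow> x = y"
  unfolding rainbow_matching_def by fastforce

lemma rainbow_matching_subset: "rainbow_matching I M R \<Longrightarrow> S \<subseteq> R \<Longrightarrow> rainbow_matching I M S"
  unfolding rainbow_matching_def by (simp add: split_beta Ball_def subset_iff) blast

lemma rainbow_matching_insert:
  assumes "rainbow_matching I M R" "c \<in> I" "c \<notin> fst ` R" "e \<in> M c"
    "fst e \<notin> left_vertices R" "snd e \<notin> right_vertices R"
  shows "rainbow_matching I M (insert (c, e) R)"
proof -
  have "\<forall>(j, f)\<in>R. c \<noteq> j \<and> fst e \<noteq> fst f \<and> snd e \<noteq> snd f"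
    using assms(3,5,6) by (auto simp: image_iff left_vertices_def right_vertices_def)
  then show ?thesis using assms(1,2,4) unfolding rainbow_matching_def by fastforce
qed

lemma rainbow_matching_finite_card_le:
  assumes "rainbow_matching {1..n} M R"
  shows "finite R" "card R \<le> n"
proof -
  have inj: "inj_on fst R" using rainbow_matching_colour_eq[OF assms] by (auto simp: inj_on_def)
  have sub: "fst ` R \<subseteq> {1..n}" using rainbow_matching_memD[OF assms] by auto
  show "finite R" using inj sub finite_imageD finite_subset by blast
  show "card R \<le> n" using card_inj_on_le[OF inj sub] by simp
qed

lemma ex_maximum_rainbow_matching:
  "\<exists>F. rainbow_matching {1..n} M F \<and> finite F \<and>
     (\<forall>R. rainbow_matching {1..n} M R \<longrightarrow> finite R \<longrightarrow> card R \<le> card F)"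
proof -
  have "rainbow_matching {1..n} M {} \<and> finite {}" unfolding rainbow_matching_def by simp
  moreover have "\<forall>R. rainbow_matching {1..n} M R \<and> finite R \<longrightarrow> card R < Suc n"
    by (meson rainbow_matching_finite_card_le(2) le_imp_less_Suc)
  ultimately show ?thesis
    using Lattices_Big.ex_has_greatest_nat[of "\<lambda>R. rainbow_matching {1..n} M R \<and> finite R"
        "{}" card "Suc n"] by blast
qed

lemma rainbow_matching_unused_colour:
  assumes "rainbow_matching {1..n} M F" "card F < n"
  obtains c where "c \<in> {1..n}" "c \<notin> fst ` F"
proof -
  have "card (fst ` F) \<le> card F"
    using card_image_le[OF rainbow_matching_finite_card_le(1)[OF assms(1)]] .
  then have "card (fst ` F) < card {1..n}" using assms(2) by simp
  then have "\<not> {1..n} \<subseteq> fst ` F"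
    using card_mono[OF finite_imageI[OF rainbow_matching_finite_card_le(1)[OF assms(1)]]] by fastforce
  then show ?thesis using that by blast
qed

locale maximum_rainbow_matching =
  fixes n :: nat and M :: "nat \<Rightarrow> ('v \<times> 'v) set" and A B :: "'v set"
    and F :: "(nat \<times> ('v \<times> 'v)) set" and L :: real
  assumes colour_class: "\<And>i. i \<in> {1..n} \<Longrightarrow> bip_matching A B (M i)"
    and finite_colour_class: "\<And>i. i \<in> {1..n} \<Longrightarrow> finite (M i)"
    and card_colour_class: "\<And>i. i \<in> {1..n} \<Longrightarrow> L \<le> real (card (M i))"
    and rainbow_F: "rainbow_matching {1..n} M F" and finite_F: "finite F"
    and maximum_F: "\<And>R. rainbow_matching {1..n} M R \<Longrightarrow> finite R \<Longrightarrow> card R \<le> card F"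
begin

definition switching :: "(nat \<times> ('v \<times> 'v)) set \<Rightarrow> bool" where
  "switching G \<longleftrightarrow> rainbow_matching {1..n} M G \<and> finite G \<and> card G = card F \<and>
     (\<forall>x \<in> G - F. fst (snd x) \<in> left_vertices F \<and> snd (snd x) \<notin> right_vertices F)"

definition new_right_vertices :: "(nat \<times> ('v \<times> 'v)) set \<Rightarrow> 'v set" where
  "new_right_vertices G = right_vertices (G - F)"

definition unused_colour :: "(nat \<times> ('v \<times> 'v)) set \<Rightarrow> nat \<Rightarrow> bool" where
  "unused_colour G c \<longleftrightarrow> c \<in> {1..n} \<and> c \<notin> fst ` G"

text \<open>The edges \<open>g\<close> of \<open>F\<close> still in \<open>G\<close> that an edge of colour \<open>c\<close> can replace, producing
  again a switching (see \<open>switching_exchange\<close>).\<close>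
definition successors :: "(nat \<times> ('v \<times> 'v)) set \<Rightarrow> nat \<Rightarrow> (nat \<times> ('v \<times> 'v)) set" where
  "successors G c = {g \<in> F \<inter> G. \<exists>e \<in> M c. fst e = fst (snd g) \<and>
     snd e \<notin> right_vertices F \<and> snd e \<notin> new_right_vertices G}"

definition freeable :: "nat \<Rightarrow> (nat \<times> ('v \<times> 'v)) set" where
  "freeable j = {g \<in> F. \<exists>G. switching G \<and> unused_colour G (fst g) \<and> card (F - G) \<le> j}"

definition freeing_pairs :: "nat \<Rightarrow> ((nat \<times> ('v \<times> 'v)) \<times> (nat \<times> ('v \<times> 'v))) set" where
  "freeing_pairs j = {(h, g). h \<in> F \<and> g \<in> F \<and> (\<exists>G. switching G \<and> unused_colour G (fst h) \<and>
     card (F - G) \<le> j \<and> g \<in> successors G (fst h))}"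

lemma switching_F: "switching F"
  unfolding switching_def using rainbow_F finite_F by auto

lemma unused_colour_edge_meets:
  assumes "switching G" "unused_colour G c" "e \<in> M c"
  shows "fst e \<in> left_vertices G \<or> snd e \<in> right_vertices G"
proof (rule ccontr)
  assume disjoint: "\<not> ?thesis"
  have "rainbow_matching {1..n} M (insert (c, e) G)"
    using rainbow_matching_insert[of "{1..n}" M G c e] assms disjoint
    unfolding switching_def unused_colour_def by auto
  moreover have "(c, e) \<notin> G" using assms(2) unfolding unused_colour_def by force
  ultimately show False using maximum_F[of "insert (c, e) G"] assms(1) unfolding switching_def by auto
qed

lemma switching_left_vertices_subset:
  assumes "switching G" shows "left_vertices G \<subseteq> left_vertices F"
  using assms unfolding switching_def left_vertices_def by force

lemma right_vertices_subset_new_right_vertices: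
  "right_vertices G \<subseteq> right_vertices F \<union> new_right_vertices G"
  unfolding new_right_vertices_def right_vertices_def by blast

lemma switching_removed_right_vertex:
  assumes "switching G" "h \<in> F" "h \<notin> G"
  shows "snd (snd h) \<notin> right_vertices G"
proof
  assume "snd (snd h) \<in> right_vertices G"
  then obtain x where x: "x \<in> G" "snd (snd x) = snd (snd h)" unfolding right_vertices_def by auto
  show False
  proof (cases "x \<in> F")
    case True
    then show ?thesis using rainbow_matching_right_eq[OF rainbow_F True assms(2) x(2)] x(1) assms(3) by simp
  next
    case False
    then show ?thesis using assms x unfolding switching_def right_vertices_def by force
  qed
qed

lemma card_new_right_vertices_le:
  assumes "switching G" shows "card (new_right_vertices G) \<le> card (F - G)"
proof -
  have fin: "finite G" using assms unfolding switching_def by auto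
  have "card (new_right_vertices G) \<le> card (G - F)"
    unfolding new_right_vertices_def using card_right_vertices_le[of "G - F"] fin by simp
  also have "\<dots> = card G - card (G \<inter> F)" using fin by (simp add: card_Diff_subset_Int)
  also have "\<dots> = card (F - G)"
    using assms finite_F unfolding switching_def by (simp add: card_Diff_subset_Int Int_commute)
  finally show ?thesis .
qed

lemma switching_exchange:
  assumes G: "switching G" and c: "unused_colour G c" and g: "g \<in> F" "g \<in> G"
    and e: "e \<in> M c" "fst e = fst (snd g)" "snd e \<notin> right_vertices F" "snd e \<notin> new_right_vertices G"
  defines "G' \<equiv> insert (c, e) (G - {g})"
  shows "switching G'" "unused_colour G' (fst g)" "F - G' = insert g (F - G)"
proof -
  have rainbow_G: "rainbow_matching {1..n} M G" and fin: "finite G" and card_G: "card G = card F"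
    using G unfolding switching_def by auto
  have c_in: "c \<in> {1..n}" "c \<notin> fst ` G" using c unfolding unused_colour_def by auto
  have "fst e \<notin> left_vertices (G - {g})"
    using rainbow_matching_left_eq[OF rainbow_G _ g(2)] e(2) unfolding left_vertices_def by force
  moreover have "snd e \<notin> right_vertices (G - {g})"
    using e(3,4) right_vertices_subset_new_right_vertices[of G] unfolding right_vertices_def by blast
  ultimately have rainbow: "rainbow_matching {1..n} M G'"
    unfolding G'_def using c_in e(1)
    by (intro rainbow_matching_insert rainbow_matching_subset[OF rainbow_G]) auto
  have "(c, e) \<notin> G - {g}" using c_in(2) by force
  then have "card G' = card G" unfolding G'_def using fin g(2)
    by (simp add: card.insert_remove) (metis Suc_pred card_gt_0_iff empty_iff)
  moreover have "\<forall>x \<in> G' - F. fst (snd x) \<in> left_vertices F \<and> snd (snd x) \<notin> right_vertices F"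
    using G e(2,3) g(1) unfolding G'_def switching_def left_vertices_def by force
  ultimately show "switching G'"
    unfolding switching_def using rainbow fin card_G G'_def by simp
  have "fst g \<in> {1..n}" using rainbow_matching_memD[OF rainbow_F g(1)] by simp
  moreover have "fst g \<noteq> c" using c_in(2) g(2) by auto
  moreover have "fst g \<notin> fst ` (G - {g})" using rainbow_matching_colour_eq[OF rainbow_G _ g(2)] by auto
  ultimately show "unused_colour G' (fst g)" unfolding unused_colour_def G'_def by auto
  have "(c, e) \<notin> F" using e(3) unfolding right_vertices_def by force
  then show "F - G' = insert g (F - G)" unfolding G'_def using g by auto
qed

lemma card_colour_class_left_in:
  assumes "c \<in> {1..n}" "finite S"
  shows "card {e \<in> M c. fst e \<in> left_vertices S} \<le> card S"
  using bip_matching_card_fst_in[OF colour_class[OF assms(1)] finite_left_vertices[OF assms(2)]]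
    card_left_vertices_le[OF assms(2)] by linarith

lemma card_colour_class_right_in:
  assumes "c \<in> {1..n}" "finite S"
  shows "card {e \<in> M c. snd e \<in> right_vertices S} \<le> card S"
  using bip_matching_card_snd_in[OF colour_class[OF assms(1)] finite_right_vertices[OF assms(2)]]
    card_right_vertices_le[OF assms(2)] by linarith

lemma card_colour_class_new_right_in:
  assumes "switching G" "c \<in> {1..n}"
  shows "card {e \<in> M c. snd e \<in> new_right_vertices G} \<le> card (F - G)"
proof -
  have "finite (new_right_vertices G)"
    using assms(1) finite_right_vertices unfolding switching_def new_right_vertices_def by blast
  then show ?thesis
    using bip_matching_card_snd_in[OF colour_class[OF assms(2)]] card_new_right_vertices_le[OF assms(1)]
    by (meson le_trans)
qed

text \<open>An edge of an unused colour either hits \<open>F\<close> on the right, or a new right vertex, or a left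
  vertex of an edge of \<open>F\<close>: of a removed one, or of a successor.\<close>
lemma card_successors_ge:
  assumes G: "switching G" and c: "unused_colour G c" and j: "card (F - G) \<le> j"
  shows "L - real (card F) - 2 * real j \<le> real (card (successors G c))"
proof -
  have c_in: "c \<in> {1..n}" using c unfolding unused_colour_def by simp
  define S1 where "S1 = {e \<in> M c. snd e \<in> right_vertices F}"
  define S2 where "S2 = {e \<in> M c. snd e \<in> new_right_vertices G}"
  define S3 where "S3 = {e \<in> M c. fst e \<in> left_vertices (F - G)}"
  define S4 where "S4 = {e \<in> M c. fst e \<in> left_vertices (successors G c)}"
  have "M c \<subseteq> S1 \<union> S2 \<union> S3 \<union> S4"
  proof
    fix e assume e: "e \<in> M c"
    show "e \<in> S1 \<union> S2 \<union> S3 \<union> S4"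
    proof (cases "snd e \<in> right_vertices F \<or> snd e \<in> new_right_vertices G")
      case True then show ?thesis using e unfolding S1_def S2_def by auto
    next
      case False
      then have "fst e \<in> left_vertices F"
        using unused_colour_edge_meets[OF G c e] switching_left_vertices_subset[OF G]
          right_vertices_subset_new_right_vertices[of G] by blast
      then obtain g where g: "g \<in> F" "fst e = fst (snd g)" unfolding left_vertices_def by auto
      then have "g \<in> F - G \<or> g \<in> successors G c"
        unfolding successors_def using e False by auto
      then show ?thesis using e g unfolding S3_def S4_def left_vertices_def by force
    qed
  qed
  then have "card (M c) \<le> card (S1 \<union> S2 \<union> S3 \<union> S4)"
    by (intro card_mono) (use finite_colour_class[OF c_in] in \<open>auto simp: S1_def S2_def S3_def S4_def\<close>)
  also have "\<dots> \<le> card S1 + card S2 + card S3 + card S4"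
    by (metis (no_types, lifting) card_Un_le le_trans add_le_mono1)
  also have "\<dots> \<le> card F + card (F - G) + card (F - G) + card (successors G c)"
    unfolding S1_def S2_def S3_def S4_def using finite_F
    by (intro add_mono card_colour_class_right_in card_colour_class_new_right_in
        card_colour_class_left_in c_in G) (auto simp: successors_def)
  finally show ?thesis using card_colour_class[OF c_in] j by linarith
qed

text \<open>The right vertices in \<open>Z\<close> are useless to colour \<open>c\<close>, so the covering bound
  \<open>L \<le> 2k + d\<close> improves by \<open>|Z|\<close>.\<close>
lemma colour_class_bound_blocked:
  assumes G: "switching G" and c: "unused_colour G c" and d: "card (F - G) \<le> d"
    and Z: "Z \<subseteq> right_vertices F"
    and blocked: "\<forall>e \<in> M c. snd e \<in> Z \<longrightarrow> fst e \<in> left_vertices F"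
  shows "L \<le> 2 * real (card F) - real (card Z) + real d"
proof -
  have c_in: "c \<in> {1..n}" using c unfolding unused_colour_def by simp
  have fin_RF: "finite (right_vertices F)" using finite_right_vertices[OF finite_F] .
  define S1 where "S1 = {e \<in> M c. fst e \<in> left_vertices F}"
  define S2 where "S2 = {e \<in> M c. snd e \<in> right_vertices F - Z}"
  define S3 where "S3 = {e \<in> M c. snd e \<in> new_right_vertices G}"
  have "M c \<subseteq> S1 \<union> S2 \<union> S3"
  proof
    fix e assume e: "e \<in> M c"
    have "fst e \<in> left_vertices F \<or> snd e \<in> right_vertices F \<or> snd e \<in> new_right_vertices G"
      using unused_colour_edge_meets[OF G c e] switching_left_vertices_subset[OF G]
        right_vertices_subset_new_right_vertices[of G] by blast
    then show "e \<in> S1 \<union> S2 \<union> S3" using e blocked unfolding S1_def S2_def S3_def by blast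
  qed
  then have "card (M c) \<le> card (S1 \<union> S2 \<union> S3)"
    by (intro card_mono) (use finite_colour_class[OF c_in] in \<open>auto simp: S1_def S2_def S3_def\<close>)
  also have "\<dots> \<le> card S1 + card S2 + card S3"
    by (metis (no_types, lifting) card_Un_le le_trans add_le_mono1)
  finally have cover: "card (M c) \<le> card S1 + card S2 + card S3" .
  have "card S1 \<le> card F" unfolding S1_def by (rule card_colour_class_left_in[OF c_in finite_F])
  moreover have "card S2 \<le> card (right_vertices F - Z)" unfolding S2_def
    by (rule bip_matching_card_snd_in[OF colour_class[OF c_in]]) (use fin_RF in simp)
  moreover have "card (right_vertices F - Z) + card Z \<le> card F"
    using card_Diff_subset[OF finite_subset[OF Z fin_RF] Z] card_mono[OF fin_RF Z]
      card_right_vertices_le[OF finite_F] by linarith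
  moreover have "card S3 \<le> card (F - G)" unfolding S3_def by (rule card_colour_class_new_right_in[OF G c_in])
  ultimately show ?thesis using cover card_colour_class[OF c_in] d by linarith
qed

lemma freeable_subset: "freeable j \<subseteq> F"
  unfolding freeable_def by auto

lemma freeing_pairs_subset: "freeing_pairs j \<subseteq> F \<times> F"
  unfolding freeing_pairs_def by auto

lemma card_freeing_pairs_ge:
  "real (card (freeable j)) * (L - real (card F) - 2 * real j) \<le> real (card (freeing_pairs j))"
proof -
  define succ where "succ h = {g. (h, g) \<in> freeing_pairs j}" for h
  have fin_succ: "finite (succ h)" if "h \<in> F" for h
    using freeing_pairs_subset finite_F unfolding succ_def by (auto intro: finite_subset[of _ F])
  have "freeing_pairs j = (SIGMA h:F. succ h)" using freeing_pairs_subset unfolding succ_def by auto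
  then have "card (freeing_pairs j) = (\<Sum>h\<in>F. card (succ h))"
    by (simp add: card_SigmaI[OF finite_F] fin_succ)
  then have card_pairs: "real (card (freeing_pairs j)) = (\<Sum>h\<in>F. real (card (succ h)))" by simp
  have succ_ge: "L - real (card F) - 2 * real j \<le> real (card (succ h))" if h: "h \<in> freeable j" for h
  proof -
    obtain G where G: "switching G" "unused_colour G (fst h)" "card (F - G) \<le> j"
      using h unfolding freeable_def by auto
    have "h \<in> F" using h freeable_subset by auto
    then have "successors G (fst h) \<subseteq> succ h"
      using G unfolding succ_def freeing_pairs_def successors_def by auto
    then have "card (successors G (fst h)) \<le> card (succ h)" using fin_succ \<open>h \<in> F\<close> by (simp add: card_mono)
    then show ?thesis using card_successors_ge[OF G] by linarith
  qed
  have "real (card (freeable j)) * (L - real (card F) - 2 * real j)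
      = (\<Sum>h\<in>freeable j. L - real (card F) - 2 * real j)" by simp
  also have "\<dots> \<le> (\<Sum>h\<in>freeable j. real (card (succ h)))" by (rule sum_mono) (rule succ_ge)
  also have "\<dots> \<le> (\<Sum>h\<in>F. real (card (succ h)))"
    by (rule sum_mono2) (use finite_F freeable_subset in auto)
  finally show ?thesis using card_pairs by simp
qed

lemma freeing_pair_switching:
  assumes "(h, g) \<in> freeing_pairs j"
  obtains G' where "switching G'" "unused_colour G' (fst g)" "card (F - G') \<le> Suc j" "h \<in> F - G'"
proof -
  obtain G where G: "switching G" "unused_colour G (fst h)" "card (F - G) \<le> j"
      "g \<in> successors G (fst h)" and h: "h \<in> F"
    using assms unfolding freeing_pairs_def by auto
  obtain e where e: "e \<in> M (fst h)" "fst e = fst (snd g)" "snd e \<notin> right_vertices F"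
      "snd e \<notin> new_right_vertices G" and g: "g \<in> F" "g \<in> G"
    using G(4) unfolding successors_def by auto
  note exchange = switching_exchange[OF G(1,2) g e]
  show ?thesis
  proof (rule that[OF exchange(1,2)])
    show "card (F - insert (fst h, e) (G - {g})) \<le> Suc j"
      using exchange(3) G(3) finite_F by (simp add: card_insert_if)
    have "h \<notin> G" using G(2) unfolding unused_colour_def by force
    then show "h \<in> F - insert (fst h, e) (G - {g})" using exchange(3) h by blast
  qed
qed

lemma freeing_pair_freeable:
  assumes "(h, g) \<in> freeing_pairs j" shows "g \<in> freeable (Suc j)"
proof -
  obtain G' where "switching G'" "unused_colour G' (fst g)" "card (F - G') \<le> Suc j"
    using freeing_pair_switching[OF assms] .
  moreover have "g \<in> F" using assms freeing_pairs_subset by auto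
  ultimately show ?thesis unfolding freeable_def by auto
qed

text \<open>Each predecessor \<open>h\<close> of \<open>g\<close> is removed in a switching freeing the colour of \<open>g\<close>, so its
  right vertex is blocked for that colour.\<close>
lemma card_freeing_predecessors_le:
  assumes g: "g \<in> freeable (Suc j)"
  shows "real (card {h. (h, g) \<in> freeing_pairs j}) \<le> 2 * real (card F) - L + real (Suc j)"
proof -
  obtain G where G: "switching G" "unused_colour G (fst g)" "card (F - G) \<le> Suc j"
    using g unfolding freeable_def by auto
  define pred where "pred = {h. (h, g) \<in> freeing_pairs j}"
  define Z where "Z = (\<lambda>h. snd (snd h)) ` pred"
  have pred_F: "pred \<subseteq> F" using freeing_pairs_subset unfolding pred_def by auto
  have Z: "Z \<subseteq> right_vertices F" unfolding Z_def right_vertices_def using pred_F by auto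
  have "inj_on (\<lambda>h. snd (snd h)) pred"
    using rainbow_matching_right_eq[OF rainbow_F] pred_F unfolding inj_on_def by blast
  then have card_Z: "card Z = card pred" unfolding Z_def by (rule card_image)
  have "\<forall>e \<in> M (fst g). snd e \<in> Z \<longrightarrow> fst e \<in> left_vertices F"
  proof (intro ballI impI)
    fix e assume e: "e \<in> M (fst g)" "snd e \<in> Z"
    then obtain h where h: "h \<in> pred" "snd e = snd (snd h)" unfolding Z_def by auto
    obtain G' where G': "switching G'" "unused_colour G' (fst g)" "h \<in> F - G'"
      using h(1) unfolding pred_def by (auto elim: freeing_pair_switching)
    have "snd e \<notin> right_vertices G'" using switching_removed_right_vertex[OF G'(1)] G'(3) h(2) by auto
    then show "fst e \<in> left_vertices F"
      using unused_colour_edge_meets[OF G'(1,2) e(1)] switching_left_vertices_subset[OF G'(1)] by blast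
  qed
  then show ?thesis using colour_class_bound_blocked[OF G Z] card_Z unfolding pred_def by simp
qed

lemma card_freeing_pairs_le:
  "real (card (freeing_pairs j)) \<le> real (card (freeable (Suc j))) * (2 * real (card F) - L + real (Suc j))"
proof -
  define pred where "pred g = {h. (h, g) \<in> freeing_pairs j}" for g
  have fin_pred: "finite (pred g)" if "g \<in> F" for g
    using freeing_pairs_subset finite_F unfolding pred_def by (auto intro: finite_subset[of _ F])
  have "prod.swap ` freeing_pairs j = (SIGMA g:F. pred g)"
    using freeing_pairs_subset unfolding pred_def by force
  then have "card (freeing_pairs j) = (\<Sum>g\<in>F. card (pred g))"
    using card_image[of prod.swap] card_SigmaI[OF finite_F] fin_pred by (metis inj_swap)
  also have "\<dots> = (\<Sum>g\<in>freeable (Suc j). card (pred g))"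
  proof (rule sum.mono_neutral_right[OF finite_F freeable_subset])
    show "\<forall>g \<in> F - freeable (Suc j). card (pred g) = 0"
    proof
      fix g assume "g \<in> F - freeable (Suc j)"
      then have "pred g = {}" using freeing_pair_freeable unfolding pred_def by blast
      then show "card (pred g) = 0" by simp
    qed
  qed
  finally have "real (card (freeing_pairs j)) = (\<Sum>g\<in>freeable (Suc j). real (card (pred g)))" by simp
  also have "\<dots> \<le> (\<Sum>g\<in>freeable (Suc j). 2 * real (card F) - L + real (Suc j))"
    by (rule sum_mono) (use card_freeing_predecessors_le in \<open>auto simp: pred_def\<close>)
  finally show ?thesis by simp
qed

lemma card_freeable_growth:
  "real (card (freeable j)) * (L - real (card F) - 2 * real j)
     \<le> real (card (freeable (Suc j))) * (2 * real (card F) - L + real (Suc j))"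
  using card_freeing_pairs_ge[of j] card_freeing_pairs_le[of j] by linarith

lemma card_freeable_le: "card (freeable j) \<le> card F"
  using card_mono[OF finite_F freeable_subset] .

context
  fixes c0 assumes c0: "unused_colour F c0"
begin

lemma colour_class_le_twice_maximum: "L \<le> 2 * real (card F)"
  using colour_class_bound_blocked[OF switching_F c0, of 0 "{}"] by simp

lemma card_freeable_one_ge: "L - real (card F) \<le> real (card (freeable 1))"
proof -
  have "successors F c0 \<subseteq> freeable 1"
  proof
    fix g assume g: "g \<in> successors F c0"
    then obtain e where e: "e \<in> M c0" "fst e = fst (snd g)" "snd e \<notin> right_vertices F"
        "snd e \<notin> new_right_vertices F" and "g \<in> F"
      unfolding successors_def by auto
    define G where "G = insert (c0, e) (F - {g})"
    have "switching G" "unused_colour G (fst g)" "F - G = {g}"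
      using switching_exchange[OF switching_F c0 \<open>g \<in> F\<close> \<open>g \<in> F\<close> e] unfolding G_def by auto
    then show "g \<in> freeable 1" unfolding freeable_def using \<open>g \<in> F\<close> by auto
  qed
  then have "card (successors F c0) \<le> card (freeable 1)"
    using card_mono finite_subset[OF freeable_subset finite_F] by blast
  then show ?thesis using card_successors_ge[OF switching_F c0, of 0] by simp
qed

end

end

lemma golden_ratio_ge: "golden_ratio \<ge> 809 / 500"
proof -
  have "(2.236::real) \<le> sqrt 5" by (rule real_le_rsqrt) (simp add: power2_eq_square)
  then show ?thesis unfolding golden_ratio_def by simp
qed

lemma linear_le_div_ln:
  fixes x :: real
  assumes "2 \<le> x" "x < 1000"
  shows "7 / 10 * x \<le> 20 * x / ln x"
proof -
  have ln_pos: "ln x > 0" using assms by simp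
  have "ln x \<le> ln 1000" using assms by simp
  also have "ln (1000::real) = ln 10 + ln 10 + ln 10"
    using ln_mult[of 10 100] ln_mult[of 10 10] by simp
  also have "ln (10::real) \<le> 9" using ln_le_minus_one[of 10] by simp
  finally have "7 / 10 * ln x \<le> 20" by simp
  then have "x * (7 / 10 * ln x) \<le> x * 20" using assms by (intro mult_left_mono) auto
  then show ?thesis using ln_pos by (simp add: field_simps)
qed

text \<open>With \<open>a = L - k \<approx> (\<phi> - 1) x\<close> and \<open>b = 2k - L \<approx> (2 - \<phi>) x\<close>, chaining the two steps
  gives \<open>a\<^sup>3 \<lesssim> x b\<^sup>2\<close>, contradicting \<open>(\<phi> - 1)\<^sup>3 > (2 - \<phi>)\<^sup>2\<close>.\<close>
lemma three_step_growth_impossible: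
  fixes x k L h1 h2 h3 :: real
  assumes x: "1000 \<le> x" and k: "k \<le> x - 1" and L: "809 / 500 * x \<le> L" "L \<le> 2 * k"
    and h1: "L - k \<le> h1" and h3: "h3 \<le> k"
    and step1: "h1 * (L - k - 2) \<le> h2 * (2 * k - L + 2)"
    and step2: "h2 * (L - k - 4) \<le> h3 * (2 * k - L + 3)"
  shows False
proof -
  define a where "a = L - k"
  define b where "b = 2 * k - L"
  have b0: "b \<ge> 0" using L unfolding b_def by simp
  have a4: "a - 4 \<ge> 0.614 * x" using x k L unfolding a_def by simp
  then have a2: "a - 2 \<ge> 0.614 * x" "a \<ge> 0.614 * x" by linarith+
  have xp: "0.614 * x \<ge> 0" using x by simp
  have b3: "b + 3 \<le> 0.383 * x" "b + 2 \<le> 0.383 * x" using x k L unfolding b_def by simp_all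
  have k0: "k \<ge> 0" using L x by linarith
  have "a * (a - 2) \<le> h1 * (a - 2)" using h1 a2 xp unfolding a_def by (intro mult_right_mono) auto
  also have "\<dots> \<le> h2 * (b + 2)" using step1 unfolding a_def b_def by simp
  finally have i1: "a * (a - 2) \<le> h2 * (b + 2)" .
  have "a * (a - 2) * (a - 4) \<le> h2 * (b + 2) * (a - 4)" using i1 a4 xp by (intro mult_right_mono) auto
  also have "\<dots> = (h2 * (a - 4)) * (b + 2)" by (simp add: algebra_simps)
  also have "\<dots> \<le> (h3 * (b + 3)) * (b + 2)"
    using step2 b0 unfolding a_def b_def by (intro mult_right_mono) auto
  also have "\<dots> \<le> k * ((b + 3) * (b + 2))" using h3 b0 by (simp add: mult_right_mono)
  also have "\<dots> \<le> x * ((0.383 * x) * (0.383 * x))" using k b3 b0 k0 x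
    by (intro mult_mono) (auto intro: mult_mono)
  finally have upper: "a * (a - 2) * (a - 4) \<le> x * ((0.383 * x) * (0.383 * x))" .
  have "(0.614 * x) * (0.614 * x) * (0.614 * x) \<le> a * (a - 2) * (a - 4)"
    using a2 a4 xp by (intro mult_mono) (auto intro: mult_mono)
  with upper have "0.614 * 0.614 * 0.614 * (x * x * x) \<le> 0.383 * 0.383 * (x * x * x)"
    by (simp add: algebra_simps)
  moreover have "x * x * x > 0" using x by simp
  ultimately show False by simp
qed

lemma growth_bounds_contradiction:
  fixes n :: nat and k L h1 h2 h3 :: real
  assumes n: "2 \<le> n" and k: "k \<le> real n - 1"
    and L: "L = golden_ratio * real n + 20 * real n / ln (real n)" "L \<le> 2 * k"
    and h1: "L - k \<le> h1" and h3: "h3 \<le> k"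
    and step1: "h1 * (L - k - 2) \<le> h2 * (2 * k - L + 2)"
    and step2: "h2 * (L - k - 4) \<le> h3 * (2 * k - L + 3)"
  shows False
proof -
  have ln_term: "20 * real n / ln (real n) \<ge> 0" using n by simp
  have golden: "809 / 500 * real n \<le> golden_ratio * real n"
    using golden_ratio_ge by (intro mult_right_mono) auto
  then have L_ge: "809 / 500 * real n \<le> L" using L(1) ln_term by linarith
  show False
  proof (cases "real n < 1000")
    case True
    then have "7 / 10 * real n \<le> 20 * real n / ln (real n)" using n by (intro linear_le_div_ln) auto
    then show False using L golden k by linarith
  next
    case False
    then show False using three_step_growth_impossible[OF _ k L_ge L(2) h1 h3 step1 step2] by simp
  qed
qed

theorem mainTheorem3:
  fixes n :: nat and A B :: "'v set" and M :: "nat \<Rightarrow> ('v \<times> 'v) set"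
  assumes "n \<ge> 2"
    and "A \<inter> B = {}"
    and "\<And>i. i \<in> {1..n} \<Longrightarrow> bip_matching A B (M i)"
    and "\<And>i. i \<in> {1..n} \<Longrightarrow> finite (M i)"
    and "\<And>i. i \<in> {1..n} \<Longrightarrow>
           real (card (M i)) \<ge> golden_ratio * real n + 20 * real n / ln (real n)"
  shows "\<exists>R. rainbow_matching {1..n} M R \<and> finite R \<and> card R = n"
proof (rule ccontr)
  assume no_perfect: "\<not> ?thesis"
  obtain F where F: "rainbow_matching {1..n} M F" "finite F"
    and maximum: "\<And>R. rainbow_matching {1..n} M R \<Longrightarrow> finite R \<Longrightarrow> card R \<le> card F"
    using ex_maximum_rainbow_matching by blast
  have "card F < n" using rainbow_matching_finite_card_le(2)[OF F(1)] F no_perfect by fastforce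
  then obtain c0 where "c0 \<in> {1..n}" "c0 \<notin> fst ` F"
    using rainbow_matching_unused_colour[OF F(1)] by blast
  define L where "L = golden_ratio * real n + 20 * real n / ln (real n)"
  interpret maximum_rainbow_matching n M A B F L
    using assms(3-5) F maximum unfolding L_def by unfold_locales auto
  have c0: "unused_colour F c0" using \<open>c0 \<in> {1..n}\<close> \<open>c0 \<notin> fst ` F\<close> unfolding unused_colour_def by simp
  show False
  proof (rule growth_bounds_contradiction[OF assms(1) _ L_def])
    show "real (card F) \<le> real n - 1" using \<open>card F < n\<close> by linarith
    show "L \<le> 2 * real (card F)" using colour_class_le_twice_maximum[OF c0] .
    show "L - real (card F) \<le> real (card (freeable 1))" using card_freeable_one_ge[OF c0] .
    show "real (card (freeable 3)) \<le> real (card F)" using card_freeable_le by simp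
    show "real (card (freeable 1)) * (L - real (card F) - 2)
        \<le> real (card (freeable 2)) * (2 * real (card F) - L + 2)"
      using card_freeable_growth[of 1] by (simp add: numeral_2_eq_2)
    show "real (card (freeable 2)) * (L - real (card F) - 4)
        \<le> real (card (freeable 3)) * (2 * real (card F) - L + 3)"
      using card_freeable_growth[of 2] by (simp add: numeral_3_eq_3)
  qed
qed

end
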